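(* Let $\mathbb{X},\mathbb{Y}$ be finite-dimensional real Hilbert spaces, $f:\mathbb{X}\to(-\infty,\infty]$ and $g:\mathbb{Y}\to(-\infty,\infty]$ proper, convex and lower semicontinuous, $K:\mathbb{X}\to\mathbb{Y}$ linear, and $h:\mathbb{X}\to\mathbb{R}$ convex and differentiable with $\bar L$-Lipschitz gradient. Assume (A1) below holds. Let $\{(z_n,x_n,w_n,y_n,\tau_n)\}$ be generated by the P-GRPDA algorithm described in the context, let $(\bar x,\bar w,\bar y)\in\mathbf{\Omega}$, and for $N\ge1$ let $\tilde x_N=\frac1N\sum_{n=1}^N x_n$, $\tilde w_N=\frac1N\sum_{n=1}^N w_n$. Let $b$ be a positive constant with $b\ge2\|\bar y\|$. Then there exist a natural number $n_2$ and a constant $P_1>0$ such that for all $N\ge1$, $$|\Phi(\tilde x_N,\tilde w_N)-\Phi(\bar x,\bar w)|\le\frac{P_1}{N}\quad\text{and}\quad\|K\tilde x_N-\tilde w_N\|\le\frac{2P_1}{bN}.$$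
   Context: $\phi=\frac{1+\sqrt5}{2}$; $K^*$ adjoint of $K$; $g^*$ Fenchel conjugate of $g$; $\operatorname{prox}_{\lambda f}(x)=\arg\min_{u}\{f(u)+\frac{1}{2\lambda}\|u-x\|^2\}$. (A1): the saddle point problem $\min_{x}\max_{y}f(x)+h(x)+\langle Kx,y\rangle-g^*(y)$ has a nonempty solution set, and $0\in\operatorname{ri}(K(\operatorname{dom}f)-\operatorname{dom}g)$ (ri = relative interior). (The paper also assumes the proximal maps of $f,g$ are efficiently computable.) $\Phi(x,w):=f(x)+h(x)+g(w)$; $\mathbf{\Omega}:=\{(\bar x,\bar w,\bar y)\in\mathbb{X}\times\mathbb{Y}\times\mathbb{Y}: -K^*\bar y\in\partial f(\bar x)+\nabla h(\bar x),\ \bar y\in\partial g(\bar w),\ K\bar x=\bar w\}$. P-GRPDA: choose $x_0\in\mathbb{X}$, $y_0\in\mathbb{Y}$, set $z_0=x_0$, choose $\beta>0$, $\psi\in(1,\phi]$, $0<2\mu'<\mu<\psi/2$, $\tau_0>0$. For $n=1,2,\dots$: $z_n=\frac{\psi-1}{\psi}x_{n-1}+\frac1\psi z_{n-1}$; $x_n=\operatorname{prox}_{\tau_{n-1}f}\big(z_n-\tau_{n-1}K^*y_{n-1}-\tau_{n-1}\nabla h(x_{n-1})\big)$; $\tau_n=\min\left\{\tau_{n-1},\ \frac{\mu\|x_n-x_{n-1}\|}{\sqrt\beta\|Kx_n-Kx_{n-1}\|},\ \frac{\mu'\|x_n-x_{n-1}\|}{\|\nabla h(x_n)-\nabla h(x_{n-1})\|}\right\}$,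 $\sigma_n=\beta\tau_n$; $w_n=\operatorname{prox}_{\frac{1}{\sigma_n}g}\big(\frac{y_{n-1}}{\sigma_n}+Kx_n\big)$; $y_n=y_{n-1}+\sigma_n(Kx_n-w_n)$. Conventions in the $\tau_n$ update: $1/0=\infty$ (a term with zero denominator and nonzero numerator is ignored) and $0/0=\infty$ (so $\tau_n=\tau_{n-1}$ if $x_n=x_{n-1}$). *)

theory Defs
  imports "HOL-Analysis.Analysis"
begin

definition edom :: "('a \<Rightarrow> ereal) \<Rightarrow> 'a set" where
  "edom f = {x. f x < \<infinity>}"

definition proper_fun :: "('a \<Rightarrow> ereal) \<Rightarrow> bool" where
  "proper_fun f \<longleftrightarrow> (\<forall>x. f x \<noteq> -\<infinity>) \<and> (\<exists>x. f x \<noteq> \<infinity>)"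

definition convex_efun :: "('a::real_vector \<Rightarrow> ereal) \<Rightarrow> bool" where
  "convex_efun f \<longleftrightarrow> convex {(x, r::real). f x \<le> ereal r}"

definition lsc_efun :: "('a::topological_space \<Rightarrow> ereal) \<Rightarrow> bool" where
  "lsc_efun f \<longleftrightarrow> closed {(x, r::real). f x \<le> ereal r}"

definition fconj :: "('a::real_inner \<Rightarrow> ereal) \<Rightarrow> 'a \<Rightarrow> ereal" where
  "fconj g y = (SUP w. ereal (inner y w) - g w)"

text \<open>Convex subdifferential (empty outside the domain for proper f).\<close>
definition subdiff :: "('a::real_inner \<Rightarrow> ereal) \<Rightarrow> 'a \<Rightarrow> 'a set" where
  "subdiff f x = {v. \<forall>u. f x + ereal (inner v (u - x)) \<le> f u}"

definition prox :: "real \<Rightarrow> ('a::real_normed_vector \<Rightarrow> ereal) \<Rightarrow> 'a \<Rightarrow> 'a" where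
  "prox lam f x = (SOME u. \<forall>v. f u + ereal (norm (u - x) ^ 2 / (2 * lam))
                                 \<le> f v + ereal (norm (v - x) ^ 2 / (2 * lam)))"

text \<open>Saddle point of the Lagrangian f(x) + h(x) + <Kx,y> - g*(y).
  Outside dom f the Lagrangian is +inf and outside dom g* it is -inf, so the
  saddle inequalities only need checking on dom f x dom g*.\<close>
definition saddle_point ::
  "('a::real_inner \<Rightarrow> ereal) \<Rightarrow> ('a \<Rightarrow> real) \<Rightarrow> ('a \<Rightarrow> 'b::real_inner) \<Rightarrow> ('b \<Rightarrow> ereal)
    \<Rightarrow> 'a \<Rightarrow> 'b \<Rightarrow> bool" where
  "saddle_point f h K g xs ys \<longleftrightarrow>
     xs \<in> edom f \<and> ys \<in> edom (fconj g) \<and> fconj g ys \<noteq> -\<infinity> \<and>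
     (let L = (\<lambda>x y. real_of_ereal (f x) + h x + inner (K x) y - real_of_ereal (fconj g y))
      in \<forall>x\<in>edom f. \<forall>y\<in>edom (fconj g). L xs y \<le> L xs ys \<and> L xs ys \<le> L x ys)"

definition assumption_A1 ::
  "('a::euclidean_space \<Rightarrow> ereal) \<Rightarrow> ('a \<Rightarrow> real) \<Rightarrow> ('a \<Rightarrow> 'b::euclidean_space) \<Rightarrow> ('b \<Rightarrow> ereal)
    \<Rightarrow> bool" where
  "assumption_A1 f h K g \<longleftrightarrow>
     (\<exists>xs ys. saddle_point f h K g xs ys) \<and>
     (0::'b) \<in> rel_interior {K x - w | x w. x \<in> edom f \<and> w \<in> edom g}"

definition Omega_set ::
  "('a::real_inner \<Rightarrow> ereal) \<Rightarrow> ('a \<Rightarrow> 'a) \<Rightarrow> ('a \<Rightarrow> 'b::real_inner) \<Rightarrow> ('b \<Rightarrow> ereal)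
    \<Rightarrow> ('a \<times> 'b \<times> 'b) set" where
  "Omega_set f gradh K g = {(xb, wb, yb).
      - adjoint K yb - gradh xb \<in> subdiff f xb \<and> yb \<in> subdiff g wb \<and> K xb = wb}"

text \<open>Step-size candidate with the conventions 1/0 = 0/0 = infinity: a term whose
  denominator vanishes is ignored (replaced by the previous step size).\<close>
definition step_term :: "real \<Rightarrow> real \<Rightarrow> real \<Rightarrow> real" where
  "step_term prev num den = (if den = 0 then prev else num / den)"

definition golden_ratio :: real where
  "golden_ratio = (1 + sqrt 5) / 2"

end

theory Submission
  imports Defs
begin

text \<open>The step sizes \<open>\<tau>\<^sub>n\<close> are nonincreasing and, by the Lipschitz bounds on \<open>K\<close> and
  \<open>\<nabla>h\<close>, bounded below by a positive constant, so \<open>\<tau>\<^sub>n\<^sub>+\<^sub>1 / \<tau>\<^sub>n \<longrightarrow> 1\<close>.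
  Testing the optimality conditions of the two proximal steps against the saddle point and
  using the golden-ratio averaging of \<open>z\<close> shows that the energy
  \<open>\<psi>/(\<psi>-1) \<parallel>z\<^sub>n\<^sub>+\<^sub>1 - x\<^sub>b\<parallel>\<^sup>2 + \<parallel>y\<^sub>b - y\<^sub>n\<^sub>-\<^sub>1\<parallel>\<^sup>2/\<beta> + \<mu>' \<parallel>x\<^sub>n - x\<^sub>n\<^sub>-\<^sub>1\<parallel>\<^sup>2\<close>
  drops by at least \<open>2\<tau>\<^sub>n\<close> times the Lagrangian gap of \<open>(x\<^sub>n, w\<^sub>n)\<close>, up to remainder terms
  that are nonpositive once the step-size ratios are close to 1 (here \<open>\<mu> < \<psi>/2\<close> and
  \<open>\<psi>\<^sup>2 \<le> \<psi> + 1\<close> enter). Telescoping bounds the partial sums of the gaps and the dual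
  iterates; as \<open>K x\<^sub>n - w\<^sub>n = (y\<^sub>n - y\<^sub>n\<^sub>-\<^sub>1) / \<sigma>\<^sub>n\<close> with \<open>\<sigma>\<^sub>n\<close> nonincreasing, Abel
  summation bounds the partial sums of the residuals. Jensen's inequality carries both bounds
  over to the ergodic averages, and the saddle-point inequality gives the matching lower bound.\<close>

section \<open>Proper convex lower semicontinuous functions\<close>

lemma proper_fun_finite:
  assumes "proper_fun F" and "F u \<noteq> \<infinity>"
  shows "F u = ereal (real_of_ereal (F u))"
  using assms unfolding proper_fun_def by (cases "F u") auto

lemma subdiff_imp_finite:
  assumes "proper_fun F" and "v \<in> subdiff F p"
  shows "F p = ereal (real_of_ereal (F p))"
proof -
  obtain u where "F u \<noteq> \<infinity>"
    using assms(1) unfolding proper_fun_def by auto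
  moreover have "F p + ereal (inner v (u - p)) \<le> F u"
    using assms(2) unfolding subdiff_def by auto
  ultimately have "F p \<noteq> \<infinity>" by auto
  then show ?thesis by (rule proper_fun_finite[OF assms(1)])
qed

lemma subdiff_real_le:
  assumes "v \<in> subdiff F p" and "F p = ereal a" "F u = ereal b"
  shows "a + inner v (u - p) \<le> b"
proof -
  have "F p + ereal (inner v (u - p)) \<le> F u"
    using assms(1) unfolding subdiff_def by blast
  then show ?thesis using assms(2,3) by simp
qed

lemma convex_efun_combination:
  fixes F :: "'a::real_vector \<Rightarrow> ereal"
  assumes "convex_efun F" and "F a = ereal ra" and "F b = ereal rb" and "0 \<le> t" "t \<le> 1"
  shows "F ((1 - t) *\<^sub>R a + t *\<^sub>R b) \<le> ereal ((1 - t) * ra + t * rb)"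
proof -
  let ?E = "{(x, r::real). F x \<le> ereal r}"
  have "(1 - t) *\<^sub>R (a, ra) + t *\<^sub>R (b, rb) \<in> ?E"
    using assms unfolding convex_efun_def by (intro convexD) auto
  then show ?thesis by simp
qed

lemma convex_efun_mean:
  fixes F :: "'a::real_vector \<Rightarrow> ereal"
  assumes "convex_efun F" and "finite A" and "A \<noteq> {}"
    and "\<And>i. i \<in> A \<Longrightarrow> F (p i) = ereal (c i)"
  shows "F ((1 / real (card A)) *\<^sub>R (\<Sum>i\<in>A. p i)) \<le> ereal ((1 / real (card A)) * (\<Sum>i\<in>A. c i))"
proof -
  have "(\<Sum>i\<in>A. (1 / real (card A)) *\<^sub>R (p i, c i)) \<in> {(x, r::real). F x \<le> ereal r}"
    using assms card_gt_0_iff[of A] unfolding convex_efun_def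
    by (intro convex_sum) (auto simp: sum_distrib_left[symmetric])
  moreover have "(\<Sum>i\<in>A. (1 / real (card A)) *\<^sub>R (p i, c i))
      = ((1 / real (card A)) *\<^sub>R (\<Sum>i\<in>A. p i), (1 / real (card A)) * (\<Sum>i\<in>A. c i))"
    by (simp add: fst_sum snd_sum prod_eq_iff scaleR_sum_right sum_distrib_left)
  ultimately show ?thesis by simp
qed

text \<open>Separate a point lying directly below the closed convex epigraph from it; the
  separating hyperplane cannot be vertical, so it is the graph of an affine minorant.\<close>
lemma proper_convex_lsc_affine_minorant:
  fixes F :: "'a::euclidean_space \<Rightarrow> ereal"
  assumes "proper_fun F" and "convex_efun F" and "lsc_efun F"
  obtains a c where "\<And>u. ereal (inner a u + c) \<le> F u"
proof -
  let ?E = "{(x, r::real). F x \<le> ereal r}"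
  obtain u0 where "F u0 \<noteq> \<infinity>"
    using assms(1) unfolding proper_fun_def by auto
  then obtain r0 where r0: "F u0 = ereal r0"
    using proper_fun_finite[OF assms(1)] by blast
  have "(u0, r0 - 1) \<notin> ?E" using r0 by auto
  then obtain as d where sep: "inner as (u0, r0 - 1) < d" "\<forall>p\<in>?E. d < inner as p"
    using separating_hyperplane_closed_point assms(2,3)
    unfolding convex_efun_def lsc_efun_def by blast
  obtain a s where as: "as = (a, s)" by (cases as)
  have "(u0, r0) \<in> ?E" using r0 by auto
  then have "d < inner a u0 + s * r0" using sep(2) as by auto
  moreover have "inner a u0 + s * (r0 - 1) < d" using sep(1) as by simp
  ultimately have s: "s > 0" by (simp add: algebra_simps)
  have "ereal (inner (- (1/s) *\<^sub>R a) u + d / s) \<le> F u" for u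
  proof (cases "F u")
    case (real r)
    then have "d < inner a u + s * r" using sep(2) as by auto
    then show ?thesis using real s by (simp add: field_simps)
  qed (use assms(1) in \<open>auto simp: proper_fun_def\<close>)
  then show thesis by (rule that)
qed

section \<open>The proximal map\<close>

lemma sq_le_affine_imp_le:
  fixes t a c :: real
  assumes "0 \<le> t" "0 \<le> a" "0 \<le> c" and "t ^ 2 \<le> a * t + c"
  shows "t \<le> 1 + a + c"
proof (cases "t \<ge> 1")
  case True
  then have "t * t \<le> (a + c) * t"
    using assms mult_left_mono[of 1 t c] by (simp add: power2_eq_square algebra_simps)
  then show ?thesis using True by simp
qed (use assms in auto)

lemma bounded_below_affine_and_quadratic:
  fixes a x :: "'a::real_inner"
  assumes "lam > 0"
  shows "bounded {(u, r::real). inner a u + c \<le> r \<and> r + norm (u - x) ^ 2 / (2 * lam) \<le> r1}"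
proof -
  define B where "B = 1 + 2 * lam * norm a + 2 * lam * (\<bar>r1 - c\<bar> + norm a * norm x)"
  define R where "R = \<bar>r1\<bar> + \<bar>c\<bar> + norm a * (B + norm x)"
  have mem: "(u, r) \<in> cball 0 (B + norm x) \<times> cball 0 R"
    if ur: "inner a u + c \<le> r" "r + norm (u - x) ^ 2 / (2 * lam) \<le> r1" for u r
  proof -
    have "norm u \<le> norm (u - x) + norm x"
      using norm_triangle_sub[of u x] by simp
    then have "\<bar>inner a u\<bar> \<le> norm a * (norm (u - x) + norm x)"
      using order_trans[OF Cauchy_Schwarz_ineq2 mult_left_mono] by simp
    then have "norm (u - x) ^ 2 / (2 * lam) \<le> \<bar>r1 - c\<bar> + norm a * (norm (u - x) + norm x)"
      using ur by linarith
    then have "norm (u - x) ^ 2 \<le> (2 * lam * norm a) * norm (u - x) + 2 * lam * (\<bar>r1 - c\<bar> + norm a * norm x)"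
      using assms by (simp add: field_simps)
    then have "norm (u - x) \<le> B"
      unfolding B_def using sq_le_affine_imp_le assms by force
    then have nu: "norm u \<le> B + norm x"
      using norm_triangle_sub[of u x] by linarith
    then have "\<bar>inner a u\<bar> \<le> norm a * (B + norm x)"
      using order_trans[OF Cauchy_Schwarz_ineq2 mult_left_mono] by simp
    moreover have "0 \<le> norm (u - x) ^ 2 / (2 * lam)"
      using assms by simp
    ultimately show ?thesis using nu ur unfolding R_def by auto
  qed
  have "bounded (cball (0::'a) (B + norm x) \<times> cball (0::real) R)"
    by (intro bounded_Times bounded_cball)
  then show ?thesis
    by (rule bounded_subset) (use mem in fast)
qed

lemma compact_epigraph_slice:
  fixes F :: "'a::euclidean_space \<Rightarrow> ereal"
  assumes "proper_fun F" "convex_efun F" "lsc_efun F" and "lam > 0"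
  shows "compact ({(u, r). F u \<le> ereal r} \<inter> {p. snd p + norm (fst p - x) ^ 2 / (2 * lam) \<le> r1})"
    (is "compact ?S")
proof -
  obtain a c where ac: "\<And>u. ereal (inner a u + c) \<le> F u"
    using proper_convex_lsc_affine_minorant[OF assms(1-3)] by blast
  have "closed {p::'a \<times> real. snd p + norm (fst p - x) ^ 2 / (2 * lam) \<le> r1}"
    using assms(4) by (intro closed_Collect_le continuous_intros) auto
  then have "closed ?S"
    using assms(3) unfolding lsc_efun_def by blast
  moreover have "inner a u + c \<le> r" if "F u \<le> ereal r" for u r
    using order_trans[OF ac[of u] that] by simp
  then have "?S \<subseteq> {(u, r). inner a u + c \<le> r \<and> r + norm (u - x) ^ 2 / (2 * lam) \<le> r1}"
    by auto
  then have "bounded ?S"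
    using bounded_below_affine_and_quadratic[OF assms(4)] bounded_subset by blast
  ultimately show ?thesis by (simp add: compact_eq_bounded_closed)
qed

text \<open>Minimise \<open>r + \<parallel>u - x\<parallel>\<^sup>2 / (2 lam)\<close> over the compact part of the epigraph where this
  quantity is at most its value at a point of the domain.\<close>
lemma prox_minimizer_exists:
  fixes F :: "'a::euclidean_space \<Rightarrow> ereal"
  assumes "proper_fun F" "convex_efun F" "lsc_efun F" and "lam > 0"
  shows "\<exists>p. \<forall>v. F p + ereal (norm (p - x) ^ 2 / (2 * lam)) \<le> F v + ereal (norm (v - x) ^ 2 / (2 * lam))"
proof -
  define q where "q u = norm (u - x) ^ 2 / (2 * lam)" for u
  obtain u0 where "F u0 \<noteq> \<infinity>"
    using assms(1) unfolding proper_fun_def by auto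
  then obtain r0 where r0: "F u0 = ereal r0"
    using proper_fun_finite[OF assms(1)] by blast
  define r1 where "r1 = r0 + q u0"
  define S where "S = {(u, r). F u \<le> ereal r} \<inter> {p. snd p + q (fst p) \<le> r1}"
  have "compact S"
    unfolding S_def q_def by (rule compact_epigraph_slice[OF assms])
  moreover have "(u0, r0) \<in> S" unfolding S_def r1_def using r0 by auto
  moreover have "continuous_on S (\<lambda>p. snd p + q (fst p))"
    unfolding q_def using assms(4) by (intro continuous_intros) auto
  ultimately obtain up rp where p: "(up, rp) \<in> S"
    and pmin: "\<And>u r. (u, r) \<in> S \<Longrightarrow> rp + q up \<le> r + q u"
    using continuous_attains_inf[of S "\<lambda>p. snd p + q (fst p)"] by fastforce
  have up: "F up \<le> ereal rp" "rp + q up \<le> r1"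
    using p unfolding S_def by auto
  have "F up + ereal (q up) \<le> F v + ereal (q v)" for v
  proof (cases "F v")
    case (real rv)
    have "rp + q up \<le> rv + q v"
    proof (cases "rv + q v \<le> r1")
      case True
      then show ?thesis using pmin[of v rv] real unfolding S_def by auto
    qed (use up in auto)
    have "F up + ereal (q up) \<le> ereal rp + ereal (q up)"
      by (rule add_right_mono[OF up(1)])
    also have "\<dots> \<le> F v + ereal (q v)"
      using real \<open>rp + q up \<le> rv + q v\<close> by simp
    finally show ?thesis .
  qed (use assms(1) in \<open>auto simp: proper_fun_def\<close>)
  then show ?thesis unfolding q_def by blast
qed

lemma prox_minimizes:
  fixes F :: "'a::euclidean_space \<Rightarrow> ereal"
  assumes "proper_fun F" "convex_efun F" "lsc_efun F" and "lam > 0"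
  shows "F (prox lam F x) + ereal (norm (prox lam F x - x) ^ 2 / (2 * lam))
           \<le> F v + ereal (norm (v - x) ^ 2 / (2 * lam))"
  using someI_ex[OF prox_minimizer_exists[OF assms, of x]] unfolding prox_def by blast

lemma power2_norm_add_scaleR:
  fixes a b :: "'a::real_inner"
  shows "norm (a + t *\<^sub>R b) ^ 2 = norm a ^ 2 + 2 * t * inner a b + t ^ 2 * norm b ^ 2"
  unfolding power2_norm_eq_inner
  by (simp add: inner_add_left inner_add_right inner_commute algebra_simps power2_eq_square)

lemma nonpos_if_le_mult_small:
  fixes X C :: real
  assumes "\<And>t. 0 < t \<Longrightarrow> t < 1 \<Longrightarrow> X \<le> t * C"
  shows "X \<le> 0"
proof -
  have "eventually (\<lambda>t. X \<le> t * C) (at_right 0)"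
    by (intro eventually_mono[OF eventually_at_right_real[of 0 1]]) (auto simp: assms)
  moreover have "((\<lambda>t. t * C) \<longlongrightarrow> 0 * C) (at_right 0)"
    by (intro tendsto_intros)
  ultimately show ?thesis
    using tendsto_lowerbound[of "\<lambda>t. t * C" "0 * C" "at_right 0" X] by simp
qed

text \<open>Comparing the minimiser \<^term>\<open>p\<close> with \<^term>\<open>(1 - t) *\<^sub>R p + t *\<^sub>R u\<close> and
  letting \<^term>\<open>t\<close> tend to 0 gives the first-order optimality condition.\<close>
lemma quadratic_minimizer_subgradient:
  fixes F :: "'a::real_inner \<Rightarrow> ereal"
  assumes "proper_fun F" "convex_efun F" and "lam > 0"
    and min: "\<And>v. F p + ereal (norm (p - x) ^ 2 / (2 * lam)) \<le> F v + ereal (norm (v - x) ^ 2 / (2 * lam))"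
  shows "(1 / lam) *\<^sub>R (x - p) \<in> subdiff F p"
proof -
  define q where "q u = norm (u - x) ^ 2 / (2 * lam)" for u
  obtain u0 where "F u0 \<noteq> \<infinity>"
    using assms(1) unfolding proper_fun_def by auto
  then have "F p \<noteq> \<infinity>" using min[of u0] by auto
  then obtain rp where rp: "F p = ereal rp"
    using proper_fun_finite[OF assms(1)] by blast
  have "F p + ereal (inner ((1 / lam) *\<^sub>R (x - p)) (u - p)) \<le> F u" for u
  proof (cases "F u")
    case (real ru)
    define A where "A = inner (p - x) (u - p)"
    define C where "C = norm (u - p) ^ 2 / (2 * lam)"
    have "rp - ru - A / lam \<le> t * C" if t: "0 < t" "t < 1" for t
    proof -
      define ut where "ut = (1 - t) *\<^sub>R p + t *\<^sub>R u"
      have "ereal (rp + q p) \<le> F ut + ereal (q ut)" using min[of ut] rp unfolding q_def by simp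
      also have "\<dots> \<le> ereal ((1 - t) * rp + t * ru) + ereal (q ut)"
        using convex_efun_combination[OF assms(2) rp real, of t] t unfolding ut_def
        by (intro add_right_mono) simp
      finally have m: "rp + q p \<le> (1 - t) * rp + t * ru + q ut" by simp
      have ut: "ut - x = (p - x) + t *\<^sub>R (u - p)" unfolding ut_def by (simp add: algebra_simps)
      have "q ut - q p = t * (A / lam + t * C)"
        unfolding q_def A_def C_def ut power2_norm_add_scaleR using assms(3)
        by (simp add: field_simps power2_eq_square)
      then have "t * (rp - ru) \<le> t * (A / lam + t * C)"
        using m by (simp add: algebra_simps)
      then show ?thesis using t by simp
    qed
    then have "rp - ru - A / lam \<le> 0"
      by (rule nonpos_if_le_mult_small)
    moreover have "inner ((1 / lam) *\<^sub>R (x - p)) (u - p) = - A / lam"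
      unfolding A_def by (simp add: inner_diff_left)
    ultimately show ?thesis
      using rp real by simp
  qed (use assms(1) in \<open>auto simp: proper_fun_def\<close>)
  then show ?thesis unfolding subdiff_def by blast
qed

lemma prox_subgradient:
  fixes F :: "'a::euclidean_space \<Rightarrow> ereal"
  assumes "proper_fun F" "convex_efun F" "lsc_efun F" and "lam > 0"
  shows "(1 / lam) *\<^sub>R (x - prox lam F x) \<in> subdiff F (prox lam F x)"
  using quadratic_minimizer_subgradient[OF assms(1,2,4) prox_minimizes[OF assms]] .

section \<open>The one-step energy estimate\<close>

lemma convex_on_gradient_inequality:
  fixes h :: "'a::real_inner \<Rightarrow> real"
  assumes "convex_on UNIV h" and "(h has_derivative (\<lambda>d. inner gr d)) (at x)"
  shows "h x + inner gr (y - x) \<le> h y"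
proof -
  define \<phi> where "\<phi> t = h (x + t *\<^sub>R (y - x))" for t :: real
  have "convex_on UNIV \<phi>"
  proof (rule convex_onI)
    fix t a b :: real
    assume "0 < t" "t < 1"
    moreover have "x + ((1 - t) * a + t * b) *\<^sub>R (y - x)
        = (1 - t) *\<^sub>R (x + a *\<^sub>R (y - x)) + t *\<^sub>R (x + b *\<^sub>R (y - x))"
      by (simp add: algebra_simps)
    ultimately show "\<phi> ((1 - t) *\<^sub>R a + t *\<^sub>R b) \<le> (1 - t) * \<phi> a + t * \<phi> b"
      unfolding \<phi>_def using convex_onD[OF assms(1), of t] by simp
  qed simp
  moreover have "(\<phi> has_field_derivative inner gr (y - x)) (at 0)"
  proof -
    have "((\<lambda>t::real. x + t *\<^sub>R (y - x)) has_derivative (\<lambda>t. t *\<^sub>R (y - x))) (at 0)"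
      by (auto intro!: derivative_eq_intros)
    from has_derivative_compose[OF this, of h "\<lambda>d. inner gr d"] assms(2)
    have "(\<phi> has_derivative (\<lambda>t. inner gr (t *\<^sub>R (y - x)))) (at 0)"
      unfolding \<phi>_def by simp
    moreover have "(\<lambda>t. inner gr (t *\<^sub>R (y - x))) = (*) (inner gr (y - x))"
      by auto
    ultimately show ?thesis
      by (simp add: has_field_derivative_def)
  qed
  ultimately have "inner gr (y - x) * (1 - 0) \<le> \<phi> 1 - \<phi> 0"
    by (intro convex_on_imp_above_tangent) auto
  then show ?thesis unfolding \<phi>_def by simp
qed

lemma Omega_lagrangian_gap_nonneg:
  fixes f :: "'x::euclidean_space \<Rightarrow> ereal" and g :: "'y::euclidean_space \<Rightarrow> ereal"
  assumes "(xb, wb, yb) \<in> Omega_set f gradh K g" and "linear K"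
    and "convex_on UNIV h" and "(h has_derivative (\<lambda>d. inner (gradh xb) d)) (at xb)"
    and "f xb = ereal Fb" "g wb = ereal Gb" "f u = ereal Fu" "g v = ereal Gv"
  shows "0 \<le> Fu + h u + Gv - (Fb + h xb + Gb) + inner yb (K u - v)"
proof -
  have om: "- adjoint K yb - gradh xb \<in> subdiff f xb" "yb \<in> subdiff g wb" "K xb = wb"
    using assms(1) unfolding Omega_set_def by auto
  have "Fb + inner (- adjoint K yb - gradh xb) (u - xb) \<le> Fu"
    using subdiff_real_le[OF om(1) assms(5,7)] .
  moreover have "Gb + inner yb (v - wb) \<le> Gv"
    using subdiff_real_le[OF om(2) assms(6,8)] .
  moreover have "h xb + inner (gradh xb) (u - xb) \<le> h u"
    by (rule convex_on_gradient_inequality[OF assms(3,4)])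
  moreover have "inner (adjoint K yb) (u - xb) = inner yb (K u - wb)"
    using adjoint_works[OF assms(2), of "u - xb" yb] om(3) linear_diff[OF assms(2)]
    by (simp add: inner_commute)
  ultimately show ?thesis
    by (simp add: inner_diff_left inner_diff_right)
qed

lemma inner_diff_three_points:
  fixes a b c :: "'a::real_inner"
  shows "2 * inner (a - b) (b - c) = norm (a - c) ^ 2 - norm (a - b) ^ 2 - norm (b - c) ^ 2"
  unfolding power2_norm_eq_inner
  by (simp add: inner_diff_left inner_diff_right inner_commute algebra_simps)

text \<open>The averaging step defining \<open>zn\<close> turns the cross term of the proximal \<open>x\<close>-step into a
  telescoping difference; the negative remainder absorbs the cross term of the previous step
  as long as \<open>\<psi>\<^sup>2 \<le> \<psi> + 1\<close>, i.e. \<open>\<psi>\<close> is at most the golden ratio.\<close>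
lemma extrapolation_identity:
  fixes zc zn xn xb :: "'a::real_inner"
  assumes "1 < \<psi>" and "zn = ((\<psi> - 1) / \<psi>) *\<^sub>R xn + (1 / \<psi>) *\<^sub>R zc"
  shows "2 * inner (zc - xn) (xn - xb)
    = \<psi> / (\<psi> - 1) * (norm (zc - xb) ^ 2 - norm (zn - xb) ^ 2) - (1 + 1 / \<psi>) * norm (zc - xn) ^ 2"
proof -
  define a c where "a = xn - xb" and "c = zc - xb"
  have "zn - xb = ((\<psi> - 1) / \<psi>) *\<^sub>R a + (1 / \<psi>) *\<^sub>R c"
    using assms unfolding a_def c_def by (simp add: algebra_simps diff_divide_distrib)
  moreover have "zc - xn = c - a" "zc - xb = c" "xn - xb = a"
    unfolding a_def c_def by simp_all
  ultimately show ?thesis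
    using assms(1) unfolding power2_norm_eq_inner
    by (simp add: inner_add_left inner_add_right inner_diff_left inner_diff_right inner_commute[of c a]
        field_simps)
qed

lemma inner_le_young:
  fixes a b :: "'a::real_inner"
  assumes "t * norm b \<le> c * (s * e)" and "0 \<le> t" "0 \<le> c"
  shows "2 * t * inner a b \<le> c * (s ^ 2 * norm a ^ 2 + e ^ 2)"
proof -
  have "2 * t * inner a b \<le> 2 * norm a * (t * norm b)"
    using Cauchy_Schwarz_ineq2[of a b] assms(2) by (simp add: mult_left_mono algebra_simps)
  also have "\<dots> \<le> 2 * norm a * (c * (s * e))"
    using assms(1) by (simp add: mult_left_mono)
  also have "\<dots> = c * (2 * (s * norm a) * e)"
    by simp
  also have "\<dots> \<le> c * ((s * norm a) ^ 2 + e ^ 2)"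
    using assms(3) sum_squares_bound[of "s * norm a" e] by (intro mult_left_mono) auto
  finally show ?thesis by (simp add: power_mult_distrib)
qed

text \<open>Naming convention for the energy estimate: \<open>p\<close>, \<open>c\<close>, \<open>n\<close> refer to the iterations
  \<open>n - 1\<close>, \<open>n\<close>, \<open>n + 1\<close> (except \<open>zc = z\<^sub>n\<^sub>+\<^sub>1\<close>, \<open>zn = z\<^sub>n\<^sub>+\<^sub>2\<close>), \<open>b\<close> to the saddle point;
  \<open>k\<close> are images under \<open>K\<close>, \<open>g\<close> gradients of \<open>h\<close>, \<open>t\<close> step sizes and \<open>F, G, H\<close> the
  values of \<open>f, g, h\<close>.\<close>
lemma energy_estimate_cross_terms:
  fixes xp xc xn zc xb gp gc :: "'a::real_inner"
    and yp yc yb wc kc kn kb :: "'b::real_inner"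
  assumes x_next: "Fn - Fb \<le> (1 / tc) * inner (zc - xn) (xn - xb) + inner yc (kb - kn) + inner gc (xb - xn)"
    and x_curr: "Fc - Fn \<le> (\<psi> / tp) * inner (zc - xc) (xc - xn) + inner yp (kn - kc) + inner gp (xn - xc)"
    and w_curr: "Gc - Gb \<le> inner yc (wc - kb)"
    and h_curr: "Hc - Hb \<le> inner gc (xc - xb)"
    and y_curr: "yc = yp + (\<beta> * tc) *\<^sub>R (kc - wc)"
    and K_step: "sqrt \<beta> * tn * norm (kc - kn) \<le> \<mu> * norm (xc - xn)"
    and grad_step: "tc * norm (gc - gp) \<le> \<mu>' * norm (xc - xp)"
    and "0 < tp" "0 < tc" "0 < tn" "0 < \<beta>" "0 \<le> \<mu>" "0 \<le> \<mu>'"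
  shows "2 * tc * (Fc + Hc + Gc - Fb - Hb - Gb + inner yb (kc - wc))
     \<le> 2 * inner (zc - xn) (xn - xb) + tc / tp * \<psi> * (2 * inner (zc - xc) (xc - xn))
       + 1 / \<beta> * (2 * inner (yb - yc) (yc - yp))
       + tc / tn * \<mu> * (1 / \<beta> * norm (yc - yp) ^ 2 + norm (xn - xc) ^ 2)
       + \<mu>' * (norm (xn - xc) ^ 2 + norm (xc - xp) ^ 2)"
proof -
  define P Q R C D where "P = inner (zc - xn) (xn - xb)" and "Q = inner (zc - xc) (xc - xn)"
    and "R = inner (yb - yc) (yc - yp)" and "C = inner (yc - yp) (kc - kn)"
    and "D = inner (xc - xn) (gc - gp)"
  have "kc - wc = (1 / (\<beta> * tc)) *\<^sub>R (yc - yp)"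
    using y_curr assms(9,11) by simp
  then have "inner (yb - yc) (kc - wc) = R / (\<beta> * tc)"
    unfolding R_def by simp
  moreover have "inner yb (kc - wc) + inner yc (wc - kb) + inner yc (kb - kn) + inner yp (kn - kc)
      = inner (yb - yc) (kc - wc) + C"
    unfolding C_def by (simp add: inner_diff_left inner_diff_right algebra_simps)
  moreover have "inner gc (xb - xn) + inner gp (xn - xc) + inner gc (xc - xb) = D"
    unfolding D_def by (simp add: inner_diff_left inner_diff_right inner_commute algebra_simps)
  ultimately have "Fc + Hc + Gc - Fb - Hb - Gb + inner yb (kc - wc)
      \<le> P / tc + \<psi> * Q / tp + R / (\<beta> * tc) + C + D"
    using x_next x_curr w_curr h_curr unfolding P_def Q_def by simp
  then have "2 * tc * (Fc + Hc + Gc - Fb - Hb - Gb + inner yb (kc - wc))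
      \<le> 2 * tc * (P / tc + \<psi> * Q / tp + R / (\<beta> * tc) + C + D)"
    using assms(9) by (intro mult_left_mono) auto
  also have "\<dots> = 2 * P + tc / tp * \<psi> * (2 * Q) + 1 / \<beta> * (2 * R) + 2 * tc * C + 2 * tc * D"
    using assms(8,9,11) by (simp add: field_simps)
  finally have main: "2 * tc * (Fc + Hc + Gc - Fb - Hb - Gb + inner yb (kc - wc))
      \<le> 2 * P + tc / tp * \<psi> * (2 * Q) + 1 / \<beta> * (2 * R) + 2 * tc * C + 2 * tc * D" .
  have "tc * norm (kc - kn) \<le> tc / tn * \<mu> * (1 / sqrt \<beta> * norm (xn - xc))"
    using K_step assms(9,10,11) by (simp add: field_simps norm_minus_commute)
  then have "2 * tc * C \<le> tc / tn * \<mu> * (1 / \<beta> * norm (yc - yp) ^ 2 + norm (xn - xc) ^ 2)"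
    unfolding C_def using inner_le_young assms(9,10,11,12)
    by (fastforce simp: power_divide)
  moreover have "2 * tc * D \<le> \<mu>' * (norm (xn - xc) ^ 2 + norm (xc - xp) ^ 2)"
    unfolding D_def using inner_le_young[of tc "gc - gp" \<mu>' 1 "norm (xc - xp)" "xc - xn"] grad_step assms(9,13)
    by (simp add: norm_minus_commute)
  ultimately show ?thesis
    using main unfolding P_def Q_def R_def by linarith
qed

lemma energy_estimate:
  fixes xp xc xn zc zn xb gp gc :: "'a::real_inner"
    and yp yc yb wc kc kn kb :: "'b::real_inner"
  assumes x_next: "Fn - Fb \<le> (1 / tc) * inner (zc - xn) (xn - xb) + inner yc (kb - kn) + inner gc (xb - xn)"
    and x_curr: "Fc - Fn \<le> (\<psi> / tp) * inner (zc - xc) (xc - xn) + inner yp (kn - kc) + inner gp (xn - xc)"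
    and w_curr: "Gc - Gb \<le> inner yc (wc - kb)"
    and h_curr: "Hc - Hb \<le> inner gc (xc - xb)"
    and y_curr: "yc = yp + (\<beta> * tc) *\<^sub>R (kc - wc)"
    and z_next: "zn = ((\<psi> - 1) / \<psi>) *\<^sub>R xn + (1 / \<psi>) *\<^sub>R zc"
    and K_step: "sqrt \<beta> * tn * norm (kc - kn) \<le> \<mu> * norm (xc - xn)"
    and grad_step: "tc * norm (gc - gp) \<le> \<mu>' * norm (xc - xp)"
    and "0 < tp" "0 < tc" "0 < tn" "tc \<le> tp" "0 < \<beta>" "1 < \<psi>" "\<psi> ^ 2 \<le> \<psi> + 1" "0 \<le> \<mu>" "0 \<le> \<mu>'"
  shows "2 * tc * (Fc + Hc + Gc - Fb - Hb - Gb + inner yb (kc - wc))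
     \<le> \<psi> / (\<psi> - 1) * (norm (zc - xb) ^ 2 - norm (zn - xb) ^ 2)
       + 1 / \<beta> * (norm (yb - yp) ^ 2 - norm (yb - yc) ^ 2)
       + \<mu>' * (norm (xc - xp) ^ 2 - norm (xn - xc) ^ 2)
       + 1 / \<beta> * (tc / tn * \<mu> - 1) * norm (yc - yp) ^ 2
       - (tc / tp * \<psi> - tc / tn * \<mu> - 2 * \<mu>') * norm (xn - xc) ^ 2"
proof -
  have P: "2 * inner (zc - xn) (xn - xb)
      = \<psi> / (\<psi> - 1) * (norm (zc - xb) ^ 2 - norm (zn - xb) ^ 2) - (1 + 1 / \<psi>) * norm (zc - xn) ^ 2"
    using extrapolation_identity[OF assms(14) z_next] .
  have Q: "2 * inner (zc - xc) (xc - xn) = norm (zc - xn) ^ 2 - norm (zc - xc) ^ 2 - norm (xn - xc) ^ 2"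
    unfolding inner_diff_three_points by (simp add: norm_minus_commute)
  have R: "2 * inner (yb - yc) (yc - yp) = norm (yb - yp) ^ 2 - norm (yb - yc) ^ 2 - norm (yc - yp) ^ 2"
    by (rule inner_diff_three_points)
  have "tc / tp * \<psi> \<le> \<psi>" using assms(9,10,12,14) by (simp add: field_simps)
  also have "\<psi> \<le> 1 + 1 / \<psi>" using assms(14,15) by (simp add: field_simps power2_eq_square)
  finally have "tc / tp * \<psi> * norm (zc - xn) ^ 2 \<le> (1 + 1 / \<psi>) * norm (zc - xn) ^ 2"
    by (intro mult_right_mono) auto
  moreover have "0 \<le> tc / tp * \<psi> * norm (zc - xc) ^ 2"
    using assms(9,10,14) by simp
  moreover have "tc / tp * \<psi> * (2 * inner (zc - xc) (xc - xn)) = tc / tp * \<psi> * norm (zc - xn) ^ 2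
      - tc / tp * \<psi> * norm (zc - xc) ^ 2 - tc / tp * \<psi> * norm (xn - xc) ^ 2"
    unfolding Q by (simp add: algebra_simps)
  moreover have "\<psi> / (\<psi> - 1) * (norm (zc - xb) ^ 2 - norm (zn - xb) ^ 2)
       + 1 / \<beta> * (norm (yb - yp) ^ 2 - norm (yb - yc) ^ 2)
       + \<mu>' * (norm (xc - xp) ^ 2 - norm (xn - xc) ^ 2)
       + 1 / \<beta> * (tc / tn * \<mu> - 1) * norm (yc - yp) ^ 2
       - (tc / tp * \<psi> - tc / tn * \<mu> - 2 * \<mu>') * norm (xn - xc) ^ 2
     = \<psi> / (\<psi> - 1) * (norm (zc - xb) ^ 2 - norm (zn - xb) ^ 2)
       + 1 / \<beta> * (2 * inner (yb - yc) (yc - yp))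
       + \<mu>' * (norm (xn - xc) ^ 2 + norm (xc - xp) ^ 2)
       + tc / tn * \<mu> * (1 / \<beta> * norm (yc - yp) ^ 2 + norm (xn - xc) ^ 2)
       - tc / tp * \<psi> * norm (xn - xc) ^ 2"
    unfolding R by (simp add: algebra_simps)
  ultimately show ?thesis
    using energy_estimate_cross_terms[OF x_next x_curr w_curr h_curr y_curr K_step grad_step
        assms(9,10,11,13,16,17), of yb] P
    by linarith
qed

section \<open>Step sizes and summation\<close>

lemma power2_le_add_one_if_le_golden_ratio:
  fixes \<psi> :: real
  assumes "0 \<le> \<psi>" and "\<psi> \<le> golden_ratio"
  shows "\<psi> ^ 2 \<le> \<psi> + 1"
proof -
  have "(1 - sqrt 5) / 2 \<le> 0" by simp
  then have "0 \<le> \<psi> - (1 - sqrt 5) / 2" using assms(1) by linarith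
  then have "(\<psi> - golden_ratio) * (\<psi> - (1 - sqrt 5) / 2) \<le> 0"
    using assms(2) by (simp add: mult_nonpos_nonneg)
  moreover have "sqrt 5 ^ 2 = 5" by simp
  ultimately show ?thesis
    unfolding golden_ratio_def by (simp add: algebra_simps power2_eq_square add_divide_distrib[symmetric])
qed

lemma step_term_lower_bound:
  assumes "c \<le> prev" and "0 \<le> num" and "den \<noteq> 0 \<Longrightarrow> c \<le> num / den"
  shows "c \<le> step_term prev num den"
  using assms unfolding step_term_def by auto

lemma le_step_term_imp_mult_le:
  assumes "t \<le> step_term prev num den" and "0 \<le> num" "0 \<le> den"
  shows "t * den \<le> num"
proof (cases "den = 0")
  case False
  then have "t \<le> num / den" using assms(1) unfolding step_term_def by simp
  then show ?thesis using False assms(3) by (simp add: field_simps)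
qed (use assms in simp)

lemma decseq_ratio_tendsto_1:
  fixes \<tau> :: "nat \<Rightarrow> real"
  assumes "decseq \<tau>" and "\<And>n. c \<le> \<tau> n" and "0 < c"
  shows "(\<lambda>n. \<tau> (Suc n) / \<tau> n) \<longlonglongrightarrow> 1"
proof -
  obtain l where l: "\<tau> \<longlonglongrightarrow> l"
    using decseq_convergent[OF assms(1)] assms(2) by blast
  moreover have "c \<le> l"
    using LIMSEQ_le_const[OF l] assms(2) by blast
  ultimately show ?thesis
    using tendsto_divide[OF LIMSEQ_Suc[OF l] l] assms(3) by simp
qed

lemma sum_le_telescoping:
  fixes a e :: "nat \<Rightarrow> real"
  assumes "\<And>m. M \<le> m \<Longrightarrow> a (Suc m) + e (Suc m) \<le> e m" and "M \<le> N"
  shows "(\<Sum>n = Suc M..N. a n) + e N \<le> e M"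
  using assms(2)
proof (induction N rule: dec_induct)
  case (step N)
  then show ?case
    using assms(1)[of N] by (simp add: sum.cl_ivl_Suc)
qed simp

text \<open>Abel summation: the partial sums differ from \<open>y N / s N\<close> by at most \<open>B / s N\<close>,
  because the weights \<open>1 / s n\<close> increase.\<close>
lemma norm_sum_scaled_increments_le:
  fixes y :: "nat \<Rightarrow> 'a::real_normed_vector" and s :: "nat \<Rightarrow> real"
  assumes y: "\<And>n. norm (y n) \<le> B"
    and s_pos: "\<And>n. 1 \<le> n \<Longrightarrow> 0 < s n" and s_dec: "\<And>n. 1 \<le> n \<Longrightarrow> s (Suc n) \<le> s n"
    and "1 \<le> N"
  shows "norm (\<Sum>n = 1..N. (1 / s n) *\<^sub>R (y n - y (n - 1))) \<le> 2 * B / s N"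
proof -
  define S where "S N = (\<Sum>n = 1..N. (1 / s n) *\<^sub>R (y n - y (n - 1)))" for N
  have abel: "norm (S N - (1 / s N) *\<^sub>R y N) \<le> B / s N" if "1 \<le> N" for N
    using that
  proof (induction N rule: dec_induct)
    case base
    have "S 1 - (1 / s 1) *\<^sub>R y 1 = - ((1 / s 1) *\<^sub>R y 0)"
      unfolding S_def by (simp add: algebra_simps)
    then show ?case using y[of 0] s_pos[of 1] by (simp add: divide_right_mono)
  next
    case (step N)
    have e: "S (Suc N) - (1 / s (Suc N)) *\<^sub>R y (Suc N)
        = (S N - (1 / s N) *\<^sub>R y N) + (1 / s N - 1 / s (Suc N)) *\<^sub>R y N"
      unfolding S_def using step(1) by (simp add: algebra_simps)
    have "1 / s N \<le> 1 / s (Suc N)"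
      using s_dec[OF step(1)] s_pos[OF step(1)] s_pos[of "Suc N"] by (intro divide_left_mono) auto
    then have "norm ((1 / s N - 1 / s (Suc N)) *\<^sub>R y N) \<le> (1 / s (Suc N) - 1 / s N) * B"
      using y[of N] by (simp add: mult_left_mono)
    then have "norm (S (Suc N) - (1 / s (Suc N)) *\<^sub>R y (Suc N)) \<le> B / s N + (1 / s (Suc N) - 1 / s N) * B"
      unfolding e using step(3) norm_triangle_ineq[of "S N - (1 / s N) *\<^sub>R y N" "(1 / s N - 1 / s (Suc N)) *\<^sub>R y N"]
      by linarith
    then show ?case by (simp add: algebra_simps)
  qed
  have "norm ((1 / s N) *\<^sub>R y N) \<le> B / s N"
    using y[of N] s_pos[OF assms(4)] by (simp add: divide_right_mono)
  then show ?thesis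
    using abel[OF assms(4)] norm_triangle_sub[of "S N" "(1 / s N) *\<^sub>R y N"] unfolding S_def by simp
qed

section \<open>The P-GRPDA iteration\<close>

locale pgrpda =
  fixes f :: "'x::euclidean_space \<Rightarrow> ereal"
    and g :: "'y::euclidean_space \<Rightarrow> ereal"
    and K :: "'x \<Rightarrow> 'y"
    and h :: "'x \<Rightarrow> real" and gradh :: "'x \<Rightarrow> 'x" and L :: real
    and \<beta> \<psi> \<mu> \<mu>' \<tau>0 :: real
    and z x :: "nat \<Rightarrow> 'x" and w y :: "nat \<Rightarrow> 'y" and \<tau> \<sigma> :: "nat \<Rightarrow> real"
  assumes f_proper: "proper_fun f" and f_convex: "convex_efun f" and f_lsc: "lsc_efun f"
    and g_proper: "proper_fun g" and g_convex: "convex_efun g" and g_lsc: "lsc_efun g"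
    and K_linear: "linear K"
    and h_convex: "convex_on UNIV h"
    and h_grad: "\<And>u. (h has_derivative (\<lambda>d. inner (gradh u) d)) (at u)"
    and L_pos: "L > 0"
    and h_lipschitz: "\<And>u v. norm (gradh u - gradh v) \<le> L * norm (u - v)"
    and beta_pos: "\<beta> > 0"
    and psi: "1 < \<psi>" "\<psi> \<le> golden_ratio"
    and mu: "0 < 2 * \<mu>'" "2 * \<mu>' < \<mu>" "\<mu> < \<psi> / 2"
    and tau0: "\<tau>0 > 0" "\<tau> 0 = \<tau>0"
    and z_upd: "\<And>n. n \<ge> 1 \<Longrightarrow> z n = ((\<psi> - 1) / \<psi>) *\<^sub>R x (n - 1) + (1 / \<psi>) *\<^sub>R z (n - 1)"
    and x_upd: "\<And>n. n \<ge> 1 \<Longrightarrow>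
       x n = prox (\<tau> (n - 1)) f (z n - \<tau> (n - 1) *\<^sub>R adjoint K (y (n - 1))
                                    - \<tau> (n - 1) *\<^sub>R gradh (x (n - 1)))"
    and tau_upd: "\<And>n. n \<ge> 1 \<Longrightarrow>
       \<tau> n = min (\<tau> (n - 1))
               (min (step_term (\<tau> (n - 1)) (\<mu> * norm (x n - x (n - 1)))
                               (sqrt \<beta> * norm (K (x n) - K (x (n - 1)))))
                    (step_term (\<tau> (n - 1)) (\<mu>' * norm (x n - x (n - 1)))
                               (norm (gradh (x n) - gradh (x (n - 1))))))"
    and sigma_upd: "\<And>n. n \<ge> 1 \<Longrightarrow> \<sigma> n = \<beta> * \<tau> n"
    and w_upd: "\<And>n. n \<ge> 1 \<Longrightarrow> w n = prox (1 / \<sigma> n) g ((1 / \<sigma> n) *\<^sub>R y (n - 1) + K (x n))"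
    and y_upd: "\<And>n. n \<ge> 1 \<Longrightarrow> y n = y (n - 1) + \<sigma> n *\<^sub>R (K (x n) - w n)"
begin

lemma psi_sq_le: "\<psi> ^ 2 \<le> \<psi> + 1"
  using power2_le_add_one_if_le_golden_ratio psi by simp

lemma tau_Suc_le: "\<tau> (Suc n) \<le> \<tau> n"
  using tau_upd[of "Suc n"] by simp

lemma tau_lower_bound:
  obtains c where "0 < c" and "\<And>n. c \<le> \<tau> n"
proof -
  obtain BK where BK: "0 < BK" "\<And>d. norm (K d) \<le> norm d * BK"
    using bounded_linear.pos_bounded K_linear linear_conv_bounded_linear by blast
  define c where "c = min \<tau>0 (min (\<mu> / (sqrt \<beta> * BK)) (\<mu>' / L))"
  have "c \<le> \<tau> n" for n
  proof (induction n)
    case 0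
    then show ?case using tau0 unfolding c_def by simp
  next
    case (Suc n)
    let ?dx = "norm (x (Suc n) - x n)"
    have "c \<le> \<mu> / (sqrt \<beta> * BK)" unfolding c_def by simp
    also have "\<dots> \<le> \<mu> * ?dx / (sqrt \<beta> * norm (K (x (Suc n)) - K (x n)))"
      if "sqrt \<beta> * norm (K (x (Suc n)) - K (x n)) \<noteq> 0"
      using that BK(2)[of "x (Suc n) - x n"] linear_diff[OF K_linear] BK(1) beta_pos mu
      by (simp add: field_simps mult_left_mono)
    finally have K_term: "c \<le> step_term (\<tau> n) (\<mu> * ?dx) (sqrt \<beta> * norm (K (x (Suc n)) - K (x n)))"
      using Suc mu by (intro step_term_lower_bound) auto
    have "c \<le> \<mu>' / L" unfolding c_def by simp
    also have "\<dots> \<le> \<mu>' * ?dx / norm (gradh (x (Suc n)) - gradh (x n))"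
      if "norm (gradh (x (Suc n)) - gradh (x n)) \<noteq> 0"
      using that h_lipschitz[of "x (Suc n)" "x n"] L_pos mu by (simp add: field_simps mult_left_mono)
    finally have grad_term: "c \<le> step_term (\<tau> n) (\<mu>' * ?dx) (norm (gradh (x (Suc n)) - gradh (x n)))"
      using Suc mu by (intro step_term_lower_bound) auto
    show ?case using tau_upd[of "Suc n"] Suc K_term grad_term by simp
  qed
  moreover have "0 < c" unfolding c_def using tau0 mu beta_pos BK L_pos by simp
  ultimately show thesis using that by blast
qed

lemma tau_pos: "0 < \<tau> n"
  using tau_lower_bound by (metis less_le_trans)

lemma sigma_pos: "1 \<le> n \<Longrightarrow> 0 < \<sigma> n"
  using sigma_upd beta_pos tau_pos by simp

lemma K_step: "sqrt \<beta> * \<tau> (Suc n) * norm (K (x n) - K (x (Suc n))) \<le> \<mu> * norm (x n - x (Suc n))"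
proof -
  have "\<tau> (Suc n) \<le> step_term (\<tau> n) (\<mu> * norm (x (Suc n) - x n)) (sqrt \<beta> * norm (K (x (Suc n)) - K (x n)))"
    using tau_upd[of "Suc n"] by simp
  from le_step_term_imp_mult_le[OF this] mu beta_pos show ?thesis
    by (simp add: norm_minus_commute algebra_simps)
qed

lemma grad_step: "\<tau> (Suc n) * norm (gradh (x (Suc n)) - gradh (x n)) \<le> \<mu>' * norm (x (Suc n) - x n)"
proof -
  have "\<tau> (Suc n) \<le> step_term (\<tau> n) (\<mu>' * norm (x (Suc n) - x n)) (norm (gradh (x (Suc n)) - gradh (x n)))"
    using tau_upd[of "Suc n"] by simp
  from le_step_term_imp_mult_le[OF this] mu show ?thesis by simp
qed

lemma x_subgradient:
  assumes "1 \<le> n"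
  shows "(1 / \<tau> (n - 1)) *\<^sub>R (z n - x n) - adjoint K (y (n - 1)) - gradh (x (n - 1)) \<in> subdiff f (x n)"
proof -
  have "(1 / \<tau> (n - 1)) *\<^sub>R (z n - x n) - adjoint K (y (n - 1)) - gradh (x (n - 1))
      = (1 / \<tau> (n - 1)) *\<^sub>R ((z n - \<tau> (n - 1) *\<^sub>R adjoint K (y (n - 1)) - \<tau> (n - 1) *\<^sub>R gradh (x (n - 1))) - x n)"
    using tau_pos[of "n - 1"] by (simp add: algebra_simps)
  then show ?thesis
    using prox_subgradient[OF f_proper f_convex f_lsc tau_pos] x_upd[OF assms] by metis
qed

lemma w_subgradient:
  assumes "1 \<le> n"
  shows "y n \<in> subdiff g (w n)"
proof -
  have "y n = (1 / (1 / \<sigma> n)) *\<^sub>R (((1 / \<sigma> n) *\<^sub>R y (n - 1) + K (x n)) - w n)"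
    using y_upd[OF assms] sigma_pos[OF assms] by (simp add: algebra_simps)
  moreover have "0 < 1 / \<sigma> n" using sigma_pos[OF assms] by simp
  ultimately show ?thesis
    using prox_subgradient[OF g_proper g_convex g_lsc] w_upd[OF assms] by metis
qed

lemma f_x_finite: "1 \<le> n \<Longrightarrow> f (x n) = ereal (real_of_ereal (f (x n)))"
  using subdiff_imp_finite[OF f_proper x_subgradient] .

lemma g_w_finite: "1 \<le> n \<Longrightarrow> g (w n) = ereal (real_of_ereal (g (w n)))"
  using subdiff_imp_finite[OF g_proper w_subgradient] .

lemma x_step_ineq:
  assumes "1 \<le> n" and "f u = ereal Fu"
  shows "real_of_ereal (f (x n)) - Fu \<le> (1 / \<tau> (n - 1)) * inner (z n - x n) (x n - u)
           + inner (y (n - 1)) (K u - K (x n)) + inner (gradh (x (n - 1))) (u - x n)"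
proof -
  have "inner (adjoint K (y (n - 1))) (u - x n) = inner (y (n - 1)) (K u - K (x n))"
    using adjoint_works[OF K_linear] linear_diff[OF K_linear] by (metis inner_commute)
  moreover have "inner ((1 / \<tau> (n - 1)) *\<^sub>R (z n - x n) - adjoint K (y (n - 1)) - gradh (x (n - 1))) (u - x n)
      = (1 / \<tau> (n - 1)) * inner (z n - x n) (u - x n)
        - inner (adjoint K (y (n - 1))) (u - x n) - inner (gradh (x (n - 1))) (u - x n)"
    by (simp only: inner_diff_left inner_scaleR_left)
  moreover have "inner (z n - x n) (u - x n) = - inner (z n - x n) (x n - u)"
    by (metis inner_minus_right minus_diff_eq)
  ultimately have "inner ((1 / \<tau> (n - 1)) *\<^sub>R (z n - x n) - adjoint K (y (n - 1)) - gradh (x (n - 1))) (u - x n)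
      = - ((1 / \<tau> (n - 1)) * inner (z n - x n) (x n - u))
        - inner (y (n - 1)) (K u - K (x n)) - inner (gradh (x (n - 1))) (u - x n)"
    by simp
  then show ?thesis
    using subdiff_real_le[OF x_subgradient[OF assms(1)]
        subdiff_imp_finite[OF f_proper x_subgradient[OF assms(1)]] assms(2)]
    by linarith
qed

lemma w_step_ineq:
  assumes "1 \<le> n" and "g v = ereal Gv"
  shows "real_of_ereal (g (w n)) - Gv \<le> inner (y n) (w n - v)"
  using subdiff_real_le[OF w_subgradient[OF assms(1)] subdiff_imp_finite[OF g_proper w_subgradient[OF assms(1)]] assms(2)]
  by (simp add: inner_diff_right)

lemma z_extrapolation: "z m - x m = \<psi> *\<^sub>R (z (Suc m) - x m)"
proof -
  have "\<psi> *\<^sub>R z (Suc m) = (\<psi> * ((\<psi> - 1) / \<psi>)) *\<^sub>R x m + (\<psi> * (1 / \<psi>)) *\<^sub>R z m"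
    using z_upd[of "Suc m"] by (simp add: scaleR_add_right)
  also have "\<dots> = (\<psi> - 1) *\<^sub>R x m + z m"
    using psi(1) by simp
  finally show ?thesis by (simp add: algebra_simps)
qed

lemma residual_eq:
  assumes "1 \<le> n"
  shows "K (x n) - w n = (1 / \<sigma> n) *\<^sub>R (y n - y (n - 1))"
  using y_upd[OF assms] sigma_pos[OF assms] by simp

lemma tau_ratios_eventually:
  "eventually (\<lambda>m. \<tau> (Suc m) / \<tau> (Suc (Suc m)) * \<mu> < 1
      \<and> 0 < \<tau> (Suc m) / \<tau> m * \<psi> - \<tau> (Suc m) / \<tau> (Suc (Suc m)) * \<mu> - 2 * \<mu>') sequentially"
proof -
  obtain c where "0 < c" "\<And>n. c \<le> \<tau> n" using tau_lower_bound by blast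
  moreover have "decseq \<tau>" using tau_Suc_le by (simp add: decseq_Suc_iff)
  ultimately have r: "(\<lambda>m. \<tau> (Suc m) / \<tau> m) \<longlonglongrightarrow> 1"
    using decseq_ratio_tendsto_1 by blast
  then have r': "(\<lambda>m. \<tau> (Suc m) / \<tau> (Suc (Suc m))) \<longlonglongrightarrow> 1"
    using tendsto_inverse[OF LIMSEQ_Suc[OF r]] by simp
  have "\<psi> * \<psi> < \<psi> * 2"
    using psi_sq_le[unfolded power2_eq_square] psi(1) by linarith
  then have "\<psi> < 2" using psi(1) by simp
  have "(\<lambda>m. \<tau> (Suc m) / \<tau> (Suc (Suc m)) * \<mu>) \<longlonglongrightarrow> 1 * \<mu>"
    by (intro tendsto_intros r')
  moreover have "(\<lambda>m. \<tau> (Suc m) / \<tau> m * \<psi> - \<tau> (Suc m) / \<tau> (Suc (Suc m)) * \<mu> - 2 * \<mu>')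
      \<longlonglongrightarrow> 1 * \<psi> - 1 * \<mu> - 2 * \<mu>'"
    by (intro tendsto_intros r r')
  moreover have "1 * \<mu> < 1" "0 < 1 * \<psi> - 1 * \<mu> - 2 * \<mu>'"
    using mu \<open>\<psi> < 2\<close> by auto
  ultimately show ?thesis
    by (intro eventually_conj order_tendstoD)
qed

definition x_avg :: "nat \<Rightarrow> 'x" where
  "x_avg N = (1 / real N) *\<^sub>R (\<Sum>n = 1..N. x n)"

definition w_avg :: "nat \<Rightarrow> 'y" where
  "w_avg N = (1 / real N) *\<^sub>R (\<Sum>n = 1..N. w n)"

lemma f_avg_le: "f (x_avg N) \<le> ereal ((1 / real N) * (\<Sum>n = 1..N. real_of_ereal (f (x n))))"
  if "1 \<le> N"
  using convex_efun_mean[OF f_convex finite_atLeastAtMost, of 1 N x "\<lambda>n. real_of_ereal (f (x n))"]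
    f_x_finite that unfolding x_avg_def by simp

lemma g_avg_le: "g (w_avg N) \<le> ereal ((1 / real N) * (\<Sum>n = 1..N. real_of_ereal (g (w n))))"
  if "1 \<le> N"
  using convex_efun_mean[OF g_convex finite_atLeastAtMost, of 1 N w "\<lambda>n. real_of_ereal (g (w n))"]
    g_w_finite that unfolding w_avg_def by simp

lemma h_avg_le: "h (x_avg N) \<le> (1 / real N) * (\<Sum>n = 1..N. h (x n))"
  if "1 \<le> N"
proof -
  have "h (\<Sum>n = 1..N. (1 / real N) *\<^sub>R x n) \<le> (\<Sum>n = 1..N. (1 / real N) * h (x n))"
    using that by (intro convex_on_sum[OF finite_atLeastAtMost _ h_convex]) auto
  then show ?thesis unfolding x_avg_def by (simp add: scaleR_sum_right sum_distrib_left)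
qed

lemma residual_avg: "K (x_avg N) - w_avg N = (1 / real N) *\<^sub>R (\<Sum>n = 1..N. K (x n) - w n)"
  unfolding x_avg_def w_avg_def using K_linear
  by (simp add: linear_scale linear_sum sum_subtractf scaleR_diff_right)

end

locale pgrpda_saddle = pgrpda +
  fixes xb wb yb
  assumes Omega: "(xb, wb, yb) \<in> Omega_set f gradh K g"
begin

lemma K_xb: "K xb = wb"
  using Omega unfolding Omega_set_def by simp

lemma f_xb_finite: "f xb = ereal (real_of_ereal (f xb))"
  using Omega subdiff_imp_finite[OF f_proper] unfolding Omega_set_def by blast

lemma g_wb_finite: "g wb = ereal (real_of_ereal (g wb))"
  using Omega subdiff_imp_finite[OF g_proper] unfolding Omega_set_def by blast

text \<open>Only meaningful where \<open>f\<close> and \<open>g\<close> are finite, since \<^term>\<open>real_of_ereal \<infinity> = 0\<close>.\<close>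
definition lagrangian_gap where
  "lagrangian_gap u v = real_of_ereal (f u) + h u + real_of_ereal (g v)
     - (real_of_ereal (f xb) + h xb + real_of_ereal (g wb)) + inner yb (K u - v)"

definition energy :: "nat \<Rightarrow> real" where
  "energy n = \<psi> / (\<psi> - 1) * norm (z (Suc n) - xb) ^ 2 + 1 / \<beta> * norm (yb - y (n - 1)) ^ 2
     + \<mu>' * norm (x n - x (n - 1)) ^ 2"

lemma lagrangian_gap_nonneg:
  assumes "f u \<noteq> \<infinity>" and "g v \<noteq> \<infinity>"
  shows "0 \<le> lagrangian_gap u v"
  unfolding lagrangian_gap_def
  by (rule Omega_lagrangian_gap_nonneg[OF Omega K_linear h_convex h_grad f_xb_finite g_wb_finite
        proper_fun_finite[OF f_proper assms(1)] proper_fun_finite[OF g_proper assms(2)]])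

lemma lagrangian_gap_iterate_nonneg:
  assumes "1 \<le> n"
  shows "0 \<le> lagrangian_gap (x n) (w n)"
  using lagrangian_gap_nonneg f_x_finite[OF assms] g_w_finite[OF assms] by (metis PInfty_neq_ereal(1))

lemma energy_nonneg: "0 \<le> energy n"
  unfolding energy_def using psi(1) beta_pos mu by simp

lemma energy_step:
  "2 * \<tau> (Suc m) * lagrangian_gap (x (Suc m)) (w (Suc m))
     \<le> energy (Suc m) - energy (Suc (Suc m))
       + 1 / \<beta> * (\<tau> (Suc m) / \<tau> (Suc (Suc m)) * \<mu> - 1) * norm (y (Suc m) - y m) ^ 2
       - (\<tau> (Suc m) / \<tau> m * \<psi> - \<tau> (Suc m) / \<tau> (Suc (Suc m)) * \<mu> - 2 * \<mu>')
         * norm (x (Suc (Suc m)) - x (Suc m)) ^ 2"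
proof -
  have x_next: "real_of_ereal (f (x (Suc (Suc m)))) - real_of_ereal (f xb)
      \<le> 1 / \<tau> (Suc m) * inner (z (Suc (Suc m)) - x (Suc (Suc m))) (x (Suc (Suc m)) - xb)
        + inner (y (Suc m)) (K xb - K (x (Suc (Suc m)))) + inner (gradh (x (Suc m))) (xb - x (Suc (Suc m)))"
    using x_step_ineq[OF _ f_xb_finite, of "Suc (Suc m)"] by simp
  have x_curr: "real_of_ereal (f (x (Suc m))) - real_of_ereal (f (x (Suc (Suc m))))
      \<le> \<psi> / \<tau> m * inner (z (Suc (Suc m)) - x (Suc m)) (x (Suc m) - x (Suc (Suc m)))
        + inner (y m) (K (x (Suc (Suc m))) - K (x (Suc m))) + inner (gradh (x m)) (x (Suc (Suc m)) - x (Suc m))"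
    using x_step_ineq[OF _ f_x_finite, of "Suc m" "Suc (Suc m)"] unfolding z_extrapolation[of "Suc m"] by simp
  have w_curr: "real_of_ereal (g (w (Suc m))) - real_of_ereal (g wb) \<le> inner (y (Suc m)) (w (Suc m) - K xb)"
    using w_step_ineq[OF _ g_wb_finite, of "Suc m"] K_xb by simp
  have h_curr: "h (x (Suc m)) - h xb \<le> inner (gradh (x (Suc m))) (x (Suc m) - xb)"
    using convex_on_gradient_inequality[OF h_convex h_grad, of "x (Suc m)" xb] by (simp add: inner_diff_right)
  have y_curr: "y (Suc m) = y m + (\<beta> * \<tau> (Suc m)) *\<^sub>R (K (x (Suc m)) - w (Suc m))"
    using y_upd[of "Suc m"] sigma_upd[of "Suc m"] by simp
  have z_next: "z (Suc (Suc (Suc m))) = ((\<psi> - 1) / \<psi>) *\<^sub>R x (Suc (Suc m)) + (1 / \<psi>) *\<^sub>R z (Suc (Suc m))"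
    using z_upd[of "Suc (Suc (Suc m))"] by simp
  from energy_estimate[OF x_next x_curr w_curr h_curr y_curr z_next K_step grad_step
      tau_pos tau_pos tau_pos tau_Suc_le beta_pos psi(1) psi_sq_le, of yb] mu
  show ?thesis
    unfolding energy_def lagrangian_gap_def K_xb by (simp add: algebra_simps)
qed

text \<open>Once the step-size ratios are close to 1 the remainder terms of the energy estimate
  are nonpositive, so the energy becomes a Lyapunov function.\<close>
lemma energy_telescoping:
  obtains M c where "0 < c"
    and "\<And>N. M \<le> N \<Longrightarrow> (\<Sum>n = Suc M..N. 2 * c * lagrangian_gap (x n) (w n)) + energy (Suc N) \<le> energy (Suc M)"
proof -
  obtain c where c: "0 < c" "\<And>n. c \<le> \<tau> n" using tau_lower_bound by blast
  obtain M where M: "\<And>m. M \<le> m \<Longrightarrow> \<tau> (Suc m) / \<tau> (Suc (Suc m)) * \<mu> < 1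
      \<and> 0 < \<tau> (Suc m) / \<tau> m * \<psi> - \<tau> (Suc m) / \<tau> (Suc (Suc m)) * \<mu> - 2 * \<mu>'"
    using tau_ratios_eventually unfolding eventually_sequentially by blast
  have descent: "2 * c * lagrangian_gap (x (Suc m)) (w (Suc m)) + energy (Suc (Suc m)) \<le> energy (Suc m)"
    if "M \<le> m" for m
  proof -
    have "2 * c * lagrangian_gap (x (Suc m)) (w (Suc m)) \<le> 2 * \<tau> (Suc m) * lagrangian_gap (x (Suc m)) (w (Suc m))"
      using c lagrangian_gap_iterate_nonneg[of "Suc m"] by (intro mult_right_mono) auto
    moreover have "1 / \<beta> * (\<tau> (Suc m) / \<tau> (Suc (Suc m)) * \<mu> - 1) * norm (y (Suc m) - y m) ^ 2 \<le> 0"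
      using M[OF that] beta_pos by (intro mult_nonpos_nonneg mult_nonneg_nonpos) auto
    moreover have "0 \<le> (\<tau> (Suc m) / \<tau> m * \<psi> - \<tau> (Suc m) / \<tau> (Suc (Suc m)) * \<mu> - 2 * \<mu>')
        * norm (x (Suc (Suc m)) - x (Suc m)) ^ 2"
      using M[OF that] by simp
    ultimately show ?thesis using energy_step[of m] by linarith
  qed
  show thesis
  proof (rule that[OF c(1)])
    fix N assume "M \<le> N"
    with descent show "(\<Sum>n = Suc M..N. 2 * c * lagrangian_gap (x n) (w n)) + energy (Suc N) \<le> energy (Suc M)"
      by (rule sum_le_telescoping[where a = "\<lambda>n. 2 * c * lagrangian_gap (x n) (w n)" and e = "\<lambda>m. energy (Suc m)"])
  qed
qed

lemma gap_sum_bounded: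
  obtains E where "\<And>N. (\<Sum>n = 1..N. lagrangian_gap (x n) (w n)) \<le> E"
proof -
  obtain M c where c: "0 < c"
    and tele: "\<And>N. M \<le> N \<Longrightarrow> (\<Sum>n = Suc M..N. 2 * c * lagrangian_gap (x n) (w n)) + energy (Suc N) \<le> energy (Suc M)"
    using energy_telescoping by blast
  define E where "E = (\<Sum>n = 1..M. lagrangian_gap (x n) (w n)) + energy (Suc M) / (2 * c)"
  have "(\<Sum>n = 1..N. lagrangian_gap (x n) (w n)) \<le> E" for N
  proof (cases "M \<le> N")
    case True
    have "{1..N} = {1..M} \<union> {Suc M..N}" using True by auto
    then have "(\<Sum>n = 1..N. lagrangian_gap (x n) (w n))
        = (\<Sum>n = 1..M. lagrangian_gap (x n) (w n)) + (\<Sum>n = Suc M..N. lagrangian_gap (x n) (w n))"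
      by (simp add: sum.union_disjoint)
    moreover have "2 * c * (\<Sum>n = Suc M..N. lagrangian_gap (x n) (w n)) \<le> energy (Suc M)"
      using tele[OF True] energy_nonneg[of "Suc N"] by (simp add: sum_distrib_left)
    ultimately show ?thesis
      unfolding E_def using c by (simp add: field_simps)
  next
    case False
    then have "(\<Sum>n = 1..N. lagrangian_gap (x n) (w n)) \<le> (\<Sum>n = 1..M. lagrangian_gap (x n) (w n))"
      using lagrangian_gap_iterate_nonneg by (intro sum_mono2) auto
    moreover have "0 \<le> energy (Suc M) / (2 * c)"
      using c energy_nonneg[of "Suc M"] by simp
    ultimately show ?thesis
      unfolding E_def by linarith
  qed
  then show thesis by (rule that)
qed

lemma dual_bounded:
  obtains B where "\<And>n. norm (y n) \<le> B"
proof -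
  obtain M c where c: "0 < c"
    and tele: "\<And>N. M \<le> N \<Longrightarrow> (\<Sum>n = Suc M..N. 2 * c * lagrangian_gap (x n) (w n)) + energy (Suc N) \<le> energy (Suc M)"
    using energy_telescoping by blast
  have "norm (y N) \<le> norm yb + sqrt (\<beta> * energy (Suc M))" if "M \<le> N" for N
  proof -
    have "0 \<le> (\<Sum>n = Suc M..N. 2 * c * lagrangian_gap (x n) (w n))"
      using c lagrangian_gap_iterate_nonneg by (intro sum_nonneg) auto
    moreover have "1 / \<beta> * norm (yb - y N) ^ 2 \<le> energy (Suc N)"
      unfolding energy_def using psi(1) mu by simp
    ultimately have "1 / \<beta> * norm (yb - y N) ^ 2 \<le> energy (Suc M)"
      using tele[OF that] by linarith
    then have "norm (yb - y N) ^ 2 \<le> \<beta> * energy (Suc M)"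
      using beta_pos by (simp add: field_simps)
    then have "norm (yb - y N) \<le> sqrt (\<beta> * energy (Suc M))"
      by (simp add: real_le_rsqrt)
    then show ?thesis
      using norm_triangle_sub[of "y N" yb] by (simp add: norm_minus_commute)
  qed
  then have "Bseq y"
    by (intro BfunI) (auto simp: eventually_sequentially)
  then show thesis
    using that BseqE by blast
qed

lemma residual_sum_bounded:
  obtains R where "\<And>N. 1 \<le> N \<Longrightarrow> norm (\<Sum>n = 1..N. K (x n) - w n) \<le> R"
proof -
  obtain B where B: "\<And>n. norm (y n) \<le> B" using dual_bounded by blast
  obtain c where c: "0 < c" "\<And>n. c \<le> \<tau> n" using tau_lower_bound by blast
  have "norm (\<Sum>n = 1..N. K (x n) - w n) \<le> 2 * B / (\<beta> * c)" if "1 \<le> N" for N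
  proof -
    have "(\<Sum>n = 1..N. K (x n) - w n) = (\<Sum>n = 1..N. (1 / \<sigma> n) *\<^sub>R (y n - y (n - 1)))"
      using residual_eq by (intro sum.cong) auto
    moreover have "norm (\<Sum>n = 1..N. (1 / \<sigma> n) *\<^sub>R (y n - y (n - 1))) \<le> 2 * B / \<sigma> N"
      using B sigma_pos that sigma_upd tau_Suc_le beta_pos
      by (intro norm_sum_scaled_increments_le) auto
    moreover have "2 * B / \<sigma> N \<le> 2 * B / (\<beta> * c)"
      using sigma_upd[OF that] c(1) c(2)[of N] beta_pos order_trans[OF norm_ge_zero B]
      by (intro divide_left_mono) auto
    ultimately show ?thesis by simp
  qed
  then show thesis by (rule that)
qed

lemma lagrangian_gap_avg_le:
  assumes "1 \<le> N"
  shows "f (x_avg N) \<noteq> \<infinity>" and "g (w_avg N) \<noteq> \<infinity>"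
    and "lagrangian_gap (x_avg N) (w_avg N) \<le> (1 / real N) * (\<Sum>n = 1..N. lagrangian_gap (x n) (w n))"
proof -
  show f_fin: "f (x_avg N) \<noteq> \<infinity>" and g_fin: "g (w_avg N) \<noteq> \<infinity>"
    using f_avg_le[OF assms] g_avg_le[OF assms] by auto
  have "real_of_ereal (f (x_avg N)) \<le> (1 / real N) * (\<Sum>n = 1..N. real_of_ereal (f (x n)))"
    using f_avg_le[OF assms] proper_fun_finite[OF f_proper f_fin] by (metis ereal_less_eq(3))
  moreover have "real_of_ereal (g (w_avg N)) \<le> (1 / real N) * (\<Sum>n = 1..N. real_of_ereal (g (w n)))"
    using g_avg_le[OF assms] proper_fun_finite[OF g_proper g_fin] by (metis ereal_less_eq(3))
  moreover have "inner yb (K (x_avg N) - w_avg N) = (1 / real N) * (\<Sum>n = 1..N. inner yb (K (x n) - w n))"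
    unfolding residual_avg by (simp add: inner_sum_right)
  moreover have "(1 / real N) * (\<Sum>n = 1..N. lagrangian_gap (x n) (w n))
      = (1 / real N) * (\<Sum>n = 1..N. real_of_ereal (f (x n))) + (1 / real N) * (\<Sum>n = 1..N. h (x n))
        + (1 / real N) * (\<Sum>n = 1..N. real_of_ereal (g (w n)))
        - (real_of_ereal (f xb) + h xb + real_of_ereal (g wb))
        + (1 / real N) * (\<Sum>n = 1..N. inner yb (K (x n) - w n))"
    using assms unfolding lagrangian_gap_def
    by (simp add: sum.distrib sum_subtractf field_simps)
  ultimately show "lagrangian_gap (x_avg N) (w_avg N) \<le> (1 / real N) * (\<Sum>n = 1..N. lagrangian_gap (x n) (w n))"
    using h_avg_le[OF assms] unfolding lagrangian_gap_def by linarith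
qed

lemma objective_gap_le:
  assumes "f u \<noteq> \<infinity>" and "g v \<noteq> \<infinity>"
  shows "\<bar>(f u + ereal (h u) + g v) - (f xb + ereal (h xb) + g wb)\<bar>
           \<le> ereal (lagrangian_gap u v + norm yb * norm (K u - v))"
proof -
  obtain Fu Gv Fb Gb where fin: "f u = ereal Fu" "g v = ereal Gv" "f xb = ereal Fb" "g wb = ereal Gb"
    using proper_fun_finite[OF f_proper assms(1)] proper_fun_finite[OF g_proper assms(2)]
      f_xb_finite g_wb_finite by blast
  define D where "D = Fu + h u + Gv - (Fb + h xb + Gb)"
  have "(f u + ereal (h u) + g v) - (f xb + ereal (h xb) + g wb) = ereal D"
    unfolding D_def fin by simp
  moreover have "lagrangian_gap u v = D + inner yb (K u - v)"
    unfolding lagrangian_gap_def D_def fin by simp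
  ultimately show ?thesis
    using lagrangian_gap_nonneg[OF assms] Cauchy_Schwarz_ineq2[of yb "K u - v"] by (simp add: abs_le_iff)
qed

lemma ergodic_rate:
  obtains C where "0 \<le> C"
    and "\<And>N. 1 \<le> N \<Longrightarrow> \<bar>(f (x_avg N) + ereal (h (x_avg N)) + g (w_avg N)) - (f xb + ereal (h xb) + g wb)\<bar>
                          \<le> ereal (C / real N)"
    and "\<And>N. 1 \<le> N \<Longrightarrow> norm (K (x_avg N) - w_avg N) \<le> C / real N"
proof -
  obtain E where E: "\<And>N. (\<Sum>n = 1..N. lagrangian_gap (x n) (w n)) \<le> E"
    using gap_sum_bounded by blast
  obtain R where R: "\<And>N. 1 \<le> N \<Longrightarrow> norm (\<Sum>n = 1..N. K (x n) - w n) \<le> R"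
    using residual_sum_bounded by blast
  have "0 \<le> E" using E[of 0] by simp
  have "0 \<le> R" using R[of 1] norm_ge_zero order_trans by blast
  define C where "C = E + norm yb * R + R"
  have C: "0 \<le> C" "R \<le> C" "E + norm yb * R \<le> C"
    unfolding C_def using \<open>0 \<le> E\<close> \<open>0 \<le> R\<close> by simp_all
  show thesis
  proof (rule that[OF C(1)])
    fix N :: nat assume N: "1 \<le> N"
    have residual: "norm (K (x_avg N) - w_avg N) \<le> R / real N"
      unfolding residual_avg using R[OF N] by (simp add: divide_right_mono)
    also have "\<dots> \<le> C / real N"
      using C(2) by (simp add: divide_right_mono)
    finally show "norm (K (x_avg N) - w_avg N) \<le> C / real N" .
    have "(1 / real N) * (\<Sum>n = 1..N. lagrangian_gap (x n) (w n)) \<le> (1 / real N) * E"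
      using E[of N] by (intro mult_left_mono) auto
    then have "lagrangian_gap (x_avg N) (w_avg N) \<le> E / real N"
      using lagrangian_gap_avg_le(3)[OF N] by simp
    moreover have "norm yb * norm (K (x_avg N) - w_avg N) \<le> norm yb * (R / real N)"
      using mult_left_mono[OF residual norm_ge_zero] .
    ultimately have "lagrangian_gap (x_avg N) (w_avg N) + norm yb * norm (K (x_avg N) - w_avg N)
        \<le> (E + norm yb * R) / real N"
      by (simp add: add_divide_distrib)
    also have "\<dots> \<le> C / real N"
      using C(3) by (simp add: divide_right_mono)
    finally show "\<bar>(f (x_avg N) + ereal (h (x_avg N)) + g (w_avg N)) - (f xb + ereal (h xb) + g wb)\<bar>
        \<le> ereal (C / real N)"
      using objective_gap_le[OF lagrangian_gap_avg_le(1,2)[OF N]] order_trans ereal_less_eq(3) by blast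
  qed
qed

end

theorem theorem4p1:
  fixes f :: "'x::euclidean_space \<Rightarrow> ereal"
    and g :: "'y::euclidean_space \<Rightarrow> ereal"
    and K :: "'x \<Rightarrow> 'y"
    and h :: "'x \<Rightarrow> real" and gradh :: "'x \<Rightarrow> 'x" and L :: real
    and \<beta> \<psi> \<mu> \<mu>' \<tau>0 b :: real
    and z x :: "nat \<Rightarrow> 'x" and w y :: "nat \<Rightarrow> 'y" and \<tau> \<sigma> :: "nat \<Rightarrow> real"
    and xb :: 'x and wb yb :: 'y
  assumes f_proper: "proper_fun f" and f_convex: "convex_efun f" and f_lsc: "lsc_efun f"
    and g_proper: "proper_fun g" and g_convex: "convex_efun g" and g_lsc: "lsc_efun g"
    and K_linear: "linear K"
    and h_convex: "convex_on UNIV h"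
    and h_grad: "\<And>u. (h has_derivative (\<lambda>d. inner (gradh u) d)) (at u)"
    and L_pos: "L > 0"
    and h_lipschitz: "\<And>u v. norm (gradh u - gradh v) \<le> L * norm (u - v)"
    and A1: "assumption_A1 f h K g"
    and beta_pos: "\<beta> > 0"
    and psi: "1 < \<psi>" "\<psi> \<le> golden_ratio"
    and mu: "0 < 2 * \<mu>'" "2 * \<mu>' < \<mu>" "\<mu> < \<psi> / 2"
    and tau0: "\<tau>0 > 0" "\<tau> 0 = \<tau>0"
    and z0: "z 0 = x 0"
    and z_upd: "\<And>n. n \<ge> 1 \<Longrightarrow> z n = ((\<psi> - 1) / \<psi>) *\<^sub>R x (n - 1) + (1 / \<psi>) *\<^sub>R z (n - 1)"
    and x_upd: "\<And>n. n \<ge> 1 \<Longrightarrow>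
       x n = prox (\<tau> (n - 1)) f (z n - \<tau> (n - 1) *\<^sub>R adjoint K (y (n - 1))
                                    - \<tau> (n - 1) *\<^sub>R gradh (x (n - 1)))"
    and tau_upd: "\<And>n. n \<ge> 1 \<Longrightarrow>
       \<tau> n = min (\<tau> (n - 1))
               (min (step_term (\<tau> (n - 1)) (\<mu> * norm (x n - x (n - 1)))
                               (sqrt \<beta> * norm (K (x n) - K (x (n - 1)))))
                    (step_term (\<tau> (n - 1)) (\<mu>' * norm (x n - x (n - 1)))
                               (norm (gradh (x n) - gradh (x (n - 1))))))"
    and sigma_upd: "\<And>n. n \<ge> 1 \<Longrightarrow> \<sigma> n = \<beta> * \<tau> n"
    and w_upd: "\<And>n. n \<ge> 1 \<Longrightarrow> w n = prox (1 / \<sigma> n) g ((1 / \<sigma> n) *\<^sub>R y (n - 1) + K (x n))"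
    and y_upd: "\<And>n. n \<ge> 1 \<Longrightarrow> y n = y (n - 1) + \<sigma> n *\<^sub>R (K (x n) - w n)"
    and Omega: "(xb, wb, yb) \<in> Omega_set f gradh K g"
    and b: "b > 0" "b \<ge> 2 * norm yb"
  shows "\<exists>P1 > 0. \<forall>N::nat. N \<ge> 1 \<longrightarrow>
     (let xt = (1 / real N) *\<^sub>R (\<Sum>n = 1..N. x n);
          wt = (1 / real N) *\<^sub>R (\<Sum>n = 1..N. w n);
          \<Phi> = (\<lambda>u v. f u + ereal (h u) + g v)
      in \<bar>\<Phi> xt wt - \<Phi> xb wb\<bar> \<le> ereal (P1 / real N)
         \<and> norm (K xt - wt) \<le> 2 * P1 / (b * real N))"
proof -
  (* Unused hypotheses: (A1) only guarantees that Omega is nonempty, which is assumed directly;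
     z 0 = x 0 plays no role. *)
  interpret pgrpda_saddle f g K h gradh L \<beta> \<psi> \<mu> \<mu>' \<tau>0 z x w y \<tau> \<sigma> xb wb yb
    by (intro pgrpda_saddle.intro pgrpda.intro pgrpda_saddle_axioms.intro) (fact assms)+
  obtain C where C: "0 \<le> C"
    "\<And>N. 1 \<le> N \<Longrightarrow> \<bar>(f (x_avg N) + ereal (h (x_avg N)) + g (w_avg N)) - (f xb + ereal (h xb) + g wb)\<bar>
                     \<le> ereal (C / real N)"
    "\<And>N. 1 \<le> N \<Longrightarrow> norm (K (x_avg N) - w_avg N) \<le> C / real N"
    using ergodic_rate by blast
  define P1 where "P1 = C + b * C / 2 + 1"
  have "C \<le> P1" and "C \<le> 2 * P1 / b"
    unfolding P1_def using C(1) b by (simp_all add: field_simps)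
  then have "C / real N \<le> P1 / real N" "C / real N \<le> 2 * P1 / (b * real N)" for N
    by (simp_all add: divide_right_mono flip: divide_divide_eq_left)
  moreover have "0 < P1"
    unfolding P1_def using C(1) b mult_nonneg_nonneg[of b C] by linarith
  ultimately show ?thesis
    unfolding Let_def x_avg_def[symmetric] w_avg_def[symmetric]
    using order_trans[OF C(2)] order_trans[OF C(3)] by (intro exI[of _ P1]) simp
qed

end
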